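(* Let $k>2d_{\text{sp}}$. Consider $k$ environments where, in environment $e_i$, $y=1$ with probability $\eta$ and $y=-1$ otherwise; conditionally on $Y=y$, ${\mathbf x}_{\text{ns}}\sim\mathcal{N}(y\mu_{\text{ns}},\Sigma_{\text{ns}})$ and ${\mathbf x}_{\text{sp}}\sim\mathcal{N}(y\mu_i,\Sigma_i)$, drawn independently, with $\mu_{\text{ns}}\in\mathbb{R}^{d_{\text{ns}}}$, $\Sigma_{\text{ns}}\in\mathbb{S}^{d_{\text{ns}}}_{++}$, $\mu_i\in\mathbb{R}^{d_{\text{sp}}}$, $\Sigma_i\in\mathbb{S}^{d_{\text{sp}}}_{++}$. Let $\sigma:\mathbb{R}\to(0,1)$ be invertible and consider classifiers $f({\mathbf x};{\mathbf w},b)=\sigma({\mathbf w}^\top{\mathbf x}-b)$ with ${\mathbf w}=[{\mathbf w}_{\text{ns}},{\mathbf w}_{\text{sp}}]$. If the environments $\{\Sigma_i,\mu_i\}_{i=1}^k$ lie in general position, then every such classifier that is calibrated on all $k$ environments satisfies ${\mathbf w}_{\text{sp}}=\mathbf{0}$.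
   Context: $\mathbb{S}^d_{++}$ denotes the $d\times d$ symmetric positive definite matrices. A classifier $f$ is calibrated on environments $e_1,\dots,e_k$ if for each $i$ and every $\alpha$ in the range of $f$ restricted to $e_i$, $P[Y=1\mid f(X)=\alpha,E=e_i]=\alpha$. Given $k>2d_{\text{sp}}$ environments with parameters $\{\Sigma_i,\mu_i\}_{i=1}^k$, they are in general position if for every nonzero ${\mathbf x}\in\mathbb{R}^{d_{\text{sp}}}$, the vectors $\begin{bmatrix}\Sigma_i{\mathbf x}+\mu_i\\ 1\end{bmatrix}\in\mathbb{R}^{d_{\text{sp}}+1}$, $i\in[k]$, span a subspace of dimension $d_{\text{sp}}+1$. *)

theory Defs
  imports "HOL-Probability.Probability"
begin

definition spd :: "real^'d^'d \<Rightarrow> bool" where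
  "spd S \<longleftrightarrow> transpose S = S \<and> (\<forall>x. x \<noteq> 0 \<longrightarrow> x \<bullet> (S *v x) > 0)"

definition gauss_pdf :: "real^'d \<Rightarrow> real^'d^'d \<Rightarrow> real^'d \<Rightarrow> real" where
  "gauss_pdf mu S x =
     exp (- (1/2) * ((x - mu) \<bullet> (matrix_inv S *v (x - mu))))
     / sqrt ((2 * pi) ^ CARD('d) * det S)"

definition lab :: "bool \<Rightarrow> real" where
  "lab y = (if y then 1 else -1)"

definition env_measure ::
  "real \<Rightarrow> real^'ns \<Rightarrow> real^'ns^'ns \<Rightarrow> real^'sp \<Rightarrow> real^'sp^'sp
     \<Rightarrow> (bool \<times> ((real^'ns) \<times> (real^'sp))) measure" where
  "env_measure eta mu_ns S_ns mu S =
     density (count_space UNIV \<Otimes>\<^sub>M (lborel \<Otimes>\<^sub>M lborel))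
       (\<lambda>(y, (xn, xs)). ennreal ((if y then eta else 1 - eta)
            * gauss_pdf (lab y *\<^sub>R mu_ns) S_ns xn * gauss_pdf (lab y *\<^sub>R mu) S xs))"

text \<open>Calibration of a score f : X -> (0,1) w.r.t. a joint law M of (Y, X):
  P[Y = 1 | f(X)] = f(X) almost surely, i.e. for every Borel set A,
  P[Y = 1, f(X) \<in> A] = E[f(X) 1{f(X) \<in> A}].\<close>
definition calibrated_on :: "('x \<Rightarrow> real) \<Rightarrow> (bool \<times> 'x) measure \<Rightarrow> bool" where
  "calibrated_on f M \<longleftrightarrow>
     (\<forall>A \<in> sets borel.
        measure M {z \<in> space M. fst z \<and> f (snd z) \<in> A}
        = (\<integral>z. indicator {z \<in> space M. f (snd z) \<in> A} z * f (snd z) \<partial>M))"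

definition general_position :: "nat \<Rightarrow> (nat \<Rightarrow> real^'sp^'sp) \<Rightarrow> (nat \<Rightarrow> real^'sp) \<Rightarrow> bool" where
  "general_position k S mu \<longleftrightarrow>
     (\<forall>x::real^'sp. x \<noteq> 0 \<longrightarrow>
        dim ({(S i *v x + mu i, 1::real) | i. i < k} :: ((real^'sp) \<times> real) set) = CARD('sp) + 1)"

definition lin_clf :: "(real \<Rightarrow> real) \<Rightarrow> real^'ns \<Rightarrow> real^'sp \<Rightarrow> real
     \<Rightarrow> (real^'ns) \<times> (real^'sp) \<Rightarrow> real" where
  "lin_clf sig w_ns w_sp b = (\<lambda>(xn, xs). sig (w_ns \<bullet> xn + w_sp \<bullet> xs - b))"

end

theory Submission
  imports Defs
begin

text \<open>
  Fix an environment and let \<open>m = w_ns \<bullet> \<mu>_ns + w_sp \<bullet> \<mu>_i\<close> and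
  \<open>v = w_ns \<bullet> \<Sigma>_ns w_ns + w_sp \<bullet> \<Sigma>_i w_sp\<close>. Given \<open>Y = y\<close>, the score
  \<open>s = w \<bullet> x - b\<close> is Gaussian with mean \<open>y m - b\<close> and variance \<open>v\<close>; this marginal is
  obtained without coordinates, because pushing the Gaussian weight of the component orthogonal
  to \<open>w\<close> forward along \<open>x \<mapsto> w \<bullet> x\<close> gives a translation-invariant measure on the line.
  Calibration only tests sets of the form \<open>{\<sigma> s \<in> A}\<close>, but for an injective Borel map \<open>\<sigma>\<close>
  these exhaust all Borel sets of scores up to null sets (Lusin), so calibration forces
  \<open>\<sigma> s = P[Y = 1 | s]\<close> almost everywhere: the logit of \<open>\<sigma>\<close> is affine with slope
  \<open>2 m / v\<close>. Since \<open>\<sigma>\<close> is shared and not constant, \<open>m / v = c \<noteq> 0\<close> is the same in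
  every environment. For \<open>w_sp \<noteq> 0\<close> this puts all points \<open>\<Sigma>_i (- c w_sp) + \<mu>_i\<close> on one
  affine hyperplane with normal \<open>w_sp\<close>, contradicting general position.
\<close>

section \<open>Lusin's theorem and preimages under injective Borel maps\<close>

lemma finite_measure_inner_compact:
  fixes \<mu> :: "'a::euclidean_space measure"
  assumes "finite_measure \<mu>" and sets_\<mu>: "sets \<mu> = sets borel"
    and E: "E \<in> sets borel" and "d > 0"
  obtains K where "compact K" "K \<subseteq> E" "measure \<mu> (E - K) < d"
proof -
  interpret finite_measure \<mu> by fact
  have E_eq: "emeasure \<mu> E = (SUP K \<in> {K. K \<subseteq> E \<and> compact K}. emeasure \<mu> K)"
    by (rule inner_regular[OF sets_\<mu> _ E]) simp
  show ?thesis
  proof (cases "measure \<mu> E < d")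
    case True
    then show ?thesis by (intro that[of "{}"]) auto
  next
    case False
    then have "ennreal (measure \<mu> E - d) < emeasure \<mu> E"
      using \<open>d > 0\<close> by (simp add: emeasure_eq_measure ennreal_lessI)
    then obtain K where K: "K \<subseteq> E" "compact K" "ennreal (measure \<mu> E - d) < emeasure \<mu> K"
      unfolding E_eq by (auto simp: less_SUP_iff)
    have "measure \<mu> E - d < measure \<mu> K"
      using K(3) False \<open>d > 0\<close> by (simp add: emeasure_eq_measure ennreal_less_iff)
    moreover have "measure \<mu> (E - K) = measure \<mu> E - measure \<mu> K"
      using K E sets_\<mu> by (intro finite_measure_Diff) (auto intro: borel_compact)
    ultimately show ?thesis using K by (intro that[of K]) auto
  qed
qed

lemma (in finite_measure) finite_measure_UN_le_sums:
  assumes "\<And>n. N n \<in> sets M" and "\<And>n. measure M (N n) \<le> a n" and "a sums s"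
  shows "measure M (\<Union>n. N n) \<le> s"
proof -
  have summable: "summable (\<lambda>n. measure M (N n))"
    using assms by (intro summable_comparison_test'[OF sums_summable[OF assms(3)], of 0]) auto
  then have "measure M (\<Union>n. N n) \<le> (\<Sum>n. measure M (N n))"
    using assms(1) by (intro finite_measure_subadditive_countably) auto
  also have "\<dots> \<le> s"
    using suminf_le[OF assms(2) summable sums_summable[OF assms(3)]] assms(3) by (simp add: sums_iff)
  finally show ?thesis .
qed

lemma continuous_on_INT_preimage_separators:
  fixes f :: "'a::topological_space \<Rightarrow> 'b::topological_space"
  assumes base: "\<And>S y. open S \<Longrightarrow> y \<in> S \<Longrightarrow> \<exists>n. y \<in> V n \<and> V n \<subseteq> S"
    and K: "\<And>n. K n \<subseteq> f -` V n"
    and K': "\<And>n. closed (K' n)" "\<And>n. K' n \<inter> f -` V n = {}"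
  shows "continuous_on (\<Inter>n. K n \<union> K' n) f"
  unfolding continuous_on_topological
proof (intro ballI allI impI)
  fix x B assume "x \<in> (\<Inter>n. K n \<union> K' n)" "open B" "f x \<in> B"
  then obtain n where "f x \<in> V n" "V n \<subseteq> B" using base by blast
  text \<open>On \<open>\<Inter>n. K n \<union> K' n\<close>, the open set \<open>- K' n\<close> only meets \<open>K n \<subseteq> f -` V n\<close>.\<close>
  then show "\<exists>A. open A \<and> x \<in> A \<and> (\<forall>y\<in>(\<Inter>n. K n \<union> K' n). y \<in> A \<longrightarrow> f y \<in> B)"
    using K K' by (intro exI[of _ "- K' n"]) blast
qed

theorem lusin_closed:
  fixes f :: "'a::euclidean_space \<Rightarrow> 'b::second_countable_topology"
  assumes "finite_measure \<mu>" and sets_\<mu>: "sets \<mu> = sets borel"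
    and f: "f \<in> borel_measurable borel" and "e > 0"
  obtains K where "closed K" "measure \<mu> (- K) < e" "continuous_on K f"
proof -
  interpret finite_measure \<mu> by fact
  obtain \<B> :: "'b set set" where \<B>: "countable \<B>" "\<And>C. C \<in> \<B> \<Longrightarrow> open C"
    "\<And>S. open S \<Longrightarrow> \<exists>U. U \<subseteq> \<B> \<and> S = \<Union>U"
    using univ_second_countable by blast
  have "\<B> \<noteq> {}" using \<B>(3)[of UNIV] by auto
  define V where "V n = from_nat_into \<B> n" for n
  have range_V: "range V = \<B>" using \<open>\<B> \<noteq> {}\<close> \<B>(1) by (simp add: V_def)
  define d where "d n = e / 8 * (1/2)^n" for n :: nat
  have d_pos: "d n > 0" for n using \<open>e > 0\<close> by (simp add: d_def)
  define E where "E n = f -` V n" for n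
  have E_borel: "E n \<in> sets borel" "- E n \<in> sets borel" for n
    using measurable_sets_borel[OF f borel_open[OF \<B>(2)]] range_V by (auto simp: E_def)
  have "\<exists>K. compact K \<and> K \<subseteq> E n \<and> measure \<mu> (E n - K) < d n" for n
    by (rule finite_measure_inner_compact[OF \<open>finite_measure \<mu>\<close> sets_\<mu> E_borel(1) d_pos]) blast
  then obtain K where K: "\<And>n. compact (K n) \<and> K n \<subseteq> E n \<and> measure \<mu> (E n - K n) < d n"
    by metis
  have "\<exists>K. compact K \<and> K \<subseteq> - E n \<and> measure \<mu> (- E n - K) < d n" for n
    by (rule finite_measure_inner_compact[OF \<open>finite_measure \<mu>\<close> sets_\<mu> E_borel(2) d_pos]) blast
  then obtain K' where K': "\<And>n. compact (K' n) \<and> K' n \<subseteq> - E n \<and> measure \<mu> (- E n - K' n) < d n"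
    by metis
  define L where "L = (\<Inter>n. K n \<union> K' n)"
  have "K n \<in> sets borel" "K' n \<in> sets borel" for n
    using K K' by (auto intro: borel_compact)
  then have in_sets: "E n - K n \<in> sets \<mu>" "- E n - K' n \<in> sets \<mu>" "- (K n \<union> K' n) \<in> sets \<mu>" for n
    using E_borel sets_\<mu> by auto
  have "measure \<mu> (- (K n \<union> K' n)) \<le> 2 * d n" for n
  proof -
    have "measure \<mu> (- (K n \<union> K' n)) \<le> measure \<mu> ((E n - K n) \<union> (- E n - K' n))"
      by (rule finite_measure_mono) (use in_sets in auto)
    also have "\<dots> \<le> measure \<mu> (E n - K n) + measure \<mu> (- E n - K' n)"
      by (rule measure_subadditive) (simp_all add: in_sets)
    also have "\<dots> \<le> 2 * d n" using K[of n] K'[of n] by simp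
    finally show ?thesis .
  qed
  moreover have "(\<lambda>n. 2 * d n) sums (e / 2)"
    using sums_mult[OF geometric_sums[of "1/2::real"], of "e/4"] by (simp add: d_def algebra_simps)
  ultimately have "measure \<mu> (\<Union>n. - (K n \<union> K' n)) \<le> e / 2"
    by (intro finite_measure_UN_le_sums in_sets)
  then have "measure \<mu> (- L) < e" using \<open>e > 0\<close> by (simp add: L_def)
  moreover have "closed L"
    unfolding L_def using K K' by (intro closed_INT) (meson closed_Un compact_imp_closed)
  moreover have "continuous_on L f"
    unfolding L_def
  proof (rule continuous_on_INT_preimage_separators)
    show "\<exists>n. y \<in> V n \<and> V n \<subseteq> S" if "open S" "y \<in> S" for S y
      using \<B>(3)[OF \<open>open S\<close>] \<open>y \<in> S\<close> range_V by blast
    show "K n \<subseteq> f -` V n" "closed (K' n)" "K' n \<inter> f -` V n = {}" for n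
      using K[of n] K'[of n] compact_imp_closed by (auto simp: E_def)
  qed
  ultimately show ?thesis using that by blast
qed

text \<open>The preimage \<open>\<sigma>\<close>-algebra of an injective Borel map exhausts every Borel set up
  to a null set: continuous injective images of compact sets are compact.\<close>
lemma inj_borel_preimage_inner_approx:
  fixes f :: "real \<Rightarrow> real"
  assumes "finite_measure \<mu>" and sets_\<mu>: "sets \<mu> = sets borel"
    and f: "f \<in> borel_measurable borel" and "inj f" and B: "B \<in> sets borel"
  obtains A where "A \<in> sets borel" "f -` A \<subseteq> B" "B - f -` A \<in> null_sets \<mu>"
proof -
  interpret finite_measure \<mu> by fact
  have "\<exists>K. closed K \<and> measure \<mu> (- K) < 1 / Suc n \<and> continuous_on K f" for n
    by (rule lusin_closed[OF \<open>finite_measure \<mu>\<close> sets_\<mu> f, of "1 / Suc n"]) auto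
  then obtain K where K: "\<And>n. closed (K n) \<and> measure \<mu> (- K n) < 1 / Suc n \<and> continuous_on (K n) f"
    by metis
  have "\<exists>C. compact C \<and> C \<subseteq> B \<inter> K n \<and> measure \<mu> (B \<inter> K n - C) < 1 / Suc n" for n
    by (rule finite_measure_inner_compact[OF \<open>finite_measure \<mu>\<close> sets_\<mu>, of "B \<inter> K n" "1 / Suc n"])
      (use B K in auto)
  then obtain C where C: "\<And>n. compact (C n) \<and> C n \<subseteq> B \<inter> K n \<and> measure \<mu> (B \<inter> K n - C n) < 1 / Suc n"
    by metis
  define A where "A = (\<Union>n. f ` C n)"
  have "compact (f ` C n)" for n
    using C[of n] K[of n] by (meson compact_continuous_image continuous_on_subset le_infE)
  then have "A \<in> sets borel" unfolding A_def by (intro sets.countable_UN) (auto intro: borel_compact)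
  have preimage_A: "f -` A = (\<Union>n. C n)"
    unfolding A_def using \<open>inj f\<close> by (auto simp: inj_vimage_image_eq vimage_Union)
  have "C n \<in> sets borel" for n
    using C by (auto intro: borel_compact)
  then have in_sets: "- K n \<in> sets \<mu>" "B \<inter> K n - C n \<in> sets \<mu>" for n
    using K B sets_\<mu> by auto
  have small: "measure \<mu> (B - f -` A) \<le> 2 / Suc n" for n
  proof -
    have "measure \<mu> (B - f -` A) \<le> measure \<mu> ((- K n) \<union> (B \<inter> K n - C n))"
      by (rule finite_measure_mono) (use preimage_A in_sets in auto)
    also have "\<dots> \<le> measure \<mu> (- K n) + measure \<mu> (B \<inter> K n - C n)"
      by (rule measure_subadditive) (simp_all add: in_sets)
    also have "\<dots> \<le> 2 / Suc n" using K[of n] C[of n] by simp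
    finally show ?thesis .
  qed
  have "measure \<mu> (B - f -` A) \<le> 0"
    by (rule LIMSEQ_le_const[OF LIMSEQ_Suc[OF lim_const_over_n[of 2]]]) (use small in auto)
  then have "measure \<mu> (B - f -` A) = 0"
    using measure_nonneg[of \<mu>] antisym by blast
  moreover have "B - f -` A \<in> sets \<mu>"
    using measurable_sets_borel[OF f \<open>A \<in> sets borel\<close>] B sets_\<mu> by auto
  ultimately have "B - f -` A \<in> null_sets \<mu>"
    by (simp add: null_sets_def emeasure_eq_measure)
  moreover have "f -` A \<subseteq> B" using preimage_A C by blast
  ultimately show ?thesis using that \<open>A \<in> sets borel\<close> by blast
qed

lemma AE_le_if_preimage_integrals_eq:
  fixes f h1 h2 :: "real \<Rightarrow> real"
  assumes f: "f \<in> borel_measurable borel" and "inj f"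
    and [measurable]: "h1 \<in> borel_measurable borel" "h2 \<in> borel_measurable borel"
    and nonneg: "\<And>t. 0 \<le> h1 t" "\<And>t. 0 \<le> h2 t"
    and int: "integrable lborel h1" "integrable lborel h2"
    and eq: "\<And>A. A \<in> sets borel \<Longrightarrow>
       (\<integral>t. indicator (f -` A) t * h1 t \<partial>lborel) = (\<integral>t. indicator (f -` A) t * h2 t \<partial>lborel)"
  shows "AE t in lborel. h1 t \<le> h2 t"
proof -
  define \<mu> where "\<mu> = density lborel (\<lambda>t. ennreal (h1 t + h2 t))"
  have "finite_measure \<mu>"
  proof
    have "emeasure \<mu> (space \<mu>) = (\<integral>\<^sup>+t. ennreal (h1 t) \<partial>lborel) + (\<integral>\<^sup>+t. ennreal (h2 t) \<partial>lborel)"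
      unfolding \<mu>_def using nonneg by (subst emeasure_density) (auto simp: nn_integral_add)
    then show "emeasure \<mu> (space \<mu>) \<noteq> \<infinity>"
      using int by (simp add: integrable_iff_bounded abs_of_nonneg nonneg less_top)
  qed
  define B where "B = {t. h2 t < h1 t}"
  have [measurable]: "B \<in> sets borel" unfolding B_def by measurable
  obtain A where A: "A \<in> sets borel" "f -` A \<subseteq> B" "B - f -` A \<in> null_sets \<mu>"
    using inj_borel_preimage_inner_approx[OF \<open>finite_measure \<mu>\<close> _ f \<open>inj f\<close>, of B] by (auto simp: \<mu>_def)
  have [measurable]: "f -` A \<in> sets borel" using measurable_sets_borel[OF f A(1)] .
  text \<open>On \<open>B\<close> the weight \<open>h1 + h2\<close> is positive, so \<open>B\<close> and \<open>f -` A\<close> agree \<open>lborel\<close>-a.e.\<close>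
  have "AE t in lborel. 0 < ennreal (h1 t + h2 t) \<longrightarrow> t \<notin> B - f -` A"
    using AE_not_in[OF A(3)] unfolding \<mu>_def by (subst (asm) AE_density) auto
  then have "AE t in lborel. indicator B t * (h1 t - h2 t) = indicator (f -` A) t * (h1 t - h2 t)"
    by eventually_elim (use A(2) nonneg in \<open>auto simp: B_def add_nonneg_pos split: split_indicator\<close>)
  then have "(\<integral>t. indicator B t * (h1 t - h2 t) \<partial>lborel)
      = (\<integral>t. indicator (f -` A) t * h1 t - indicator (f -` A) t * h2 t \<partial>lborel)"
    by (subst integral_cong_AE) (auto simp: algebra_simps)
  also have "\<dots> = 0"
    using eq[OF A(1)] int by (simp add: integrable_real_mult_indicator mult.commute)
  finally have "(\<integral>t. indicator B t * (h1 t - h2 t) \<partial>lborel) = 0" .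
  moreover have "integrable lborel (\<lambda>t. indicator B t * (h1 t - h2 t))"
    using int by (subst mult.commute, intro integrable_real_mult_indicator) auto
  moreover have "0 \<le> indicator B t * (h1 t - h2 t)" for t
    by (auto simp: B_def split: split_indicator)
  ultimately have "AE t in lborel. indicator B t * (h1 t - h2 t) = 0"
    by (subst (asm) integral_nonneg_eq_0_iff_AE) auto
  then show ?thesis
    by eventually_elim (auto simp: B_def indicator_def split: if_splits)
qed

lemma AE_eq_if_preimage_integrals_eq:
  fixes f h1 h2 :: "real \<Rightarrow> real"
  assumes "f \<in> borel_measurable borel" "inj f"
    and "h1 \<in> borel_measurable borel" "h2 \<in> borel_measurable borel"
    and "\<And>t. 0 \<le> h1 t" "\<And>t. 0 \<le> h2 t"
    and "integrable lborel h1" "integrable lborel h2"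
    and "\<And>A. A \<in> sets borel \<Longrightarrow>
       (\<integral>t. indicator (f -` A) t * h1 t \<partial>lborel) = (\<integral>t. indicator (f -` A) t * h2 t \<partial>lborel)"
  shows "AE t in lborel. h1 t = h2 t"
proof -
  have "AE t in lborel. h1 t \<le> h2 t"
    using assms by (rule AE_le_if_preimage_integrals_eq)
  moreover have "AE t in lborel. h2 t \<le> h1 t"
    by (rule AE_le_if_preimage_integrals_eq[OF assms(1,2,4,3,6,5,8,7)]) (simp add: assms(9))
  ultimately show ?thesis by eventually_elim simp
qed

section \<open>Translation-invariant measures on the real line\<close>

lemma additive_mono_imp_linear:
  fixes G :: "real \<Rightarrow> real"
  assumes add: "\<And>x y. 0 \<le> x \<Longrightarrow> 0 \<le> y \<Longrightarrow> G (x + y) = G x + G y"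
    and mono: "\<And>x y. 0 \<le> x \<Longrightarrow> x \<le> y \<Longrightarrow> G x \<le> G y"
    and "0 \<le> d"
  shows "G d = G 1 * d"
proof -
  have G0: "G 0 = 0" using add[of 0 0] by simp
  have mult: "G (real n * x) = real n * G x" if "0 \<le> x" for n x
  proof (induction n)
    case (Suc n)
    have "G (real (Suc n) * x) = G (real n * x + x)" by (simp add: algebra_simps)
    also have "\<dots> = G (real n * x) + G x" using that by (intro add) auto
    finally show ?case using Suc by (simp add: algebra_simps)
  qed (simp add: G0)
  have frac: "G (real k / real n) = real k * G 1 / real n" if "n > 0" for k n
    using mult[of "1 / real n" k] mult[of "1 / real n" n] that by (simp add: field_simps)
  have "G 1 \<ge> 0" using mono[of 0 1] G0 by simp
  text \<open>Squeeze \<open>d\<close> between consecutive multiples of \<open>1 / n\<close>.\<close>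
  have close: "\<bar>G d - G 1 * d\<bar> \<le> G 1 / real n" if "n > 0" for n
  proof -
    define k where "k = nat \<lfloor>real n * d\<rfloor>"
    have lower: "real k / real n \<le> d" and upper: "d \<le> real (k + 1) / real n"
      using \<open>0 \<le> d\<close> \<open>n > 0\<close> by (simp_all add: k_def field_simps) linarith
    have "G (real k / real n) \<le> G d" by (rule mono[OF _ lower]) simp
    moreover have "G d \<le> G (real (k + 1) / real n)" by (rule mono[OF \<open>0 \<le> d\<close> upper])
    ultimately have "real k * G 1 / real n \<le> G d" "G d \<le> real (k + 1) * G 1 / real n"
      by (simp_all only: frac[OF that])
    moreover have "real k * G 1 / real n \<le> G 1 * d" "G 1 * d \<le> real (k + 1) * G 1 / real n"
      using mult_left_mono[OF lower \<open>G 1 \<ge> 0\<close>] mult_left_mono[OF upper \<open>G 1 \<ge> 0\<close>] by (simp_all add: mult.commute)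
    ultimately show ?thesis by (simp add: add_divide_distrib distrib_right abs_le_iff)
  qed
  have "\<bar>G d - G 1 * d\<bar> \<le> 0"
    by (rule LIMSEQ_le_const[OF LIMSEQ_Suc[OF lim_const_over_n[of "G 1"]]]) (use close[of "Suc _"] in auto)
  then show ?thesis by simp
qed

lemma translation_invariant_emeasure_atLeastLessThan:
  fixes \<nu> :: "real measure"
  assumes sets_\<nu>: "sets \<nu> = sets borel"
    and inv: "\<And>\<tau> B. B \<in> sets borel \<Longrightarrow> emeasure \<nu> ((\<lambda>x. x + \<tau>) -` B) = emeasure \<nu> B"
    and unit: "emeasure \<nu> {0..<1} = ennreal C" and "0 \<le> C" and "0 \<le> d"
  shows "emeasure \<nu> {a..<a + d} = ennreal (C * d)"
proof -
  define F where "F d = emeasure \<nu> {0..<d}" for d :: real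
  have shift: "emeasure \<nu> {a..<a + d} = F d" for a d
  proof -
    have "{a..<a + d} = (\<lambda>x. x + (- a)) -` {0..<d}" by auto
    then show ?thesis unfolding F_def using inv[of "{0..<d}" "- a"] by simp
  qed
  have F_add: "F (x + y) = F x + F y" if "0 \<le> x" "0 \<le> y" for x y
  proof -
    have "{0..<x + y} = {0..<x} \<union> {x..<x + y}" using that by auto
    then have "F (x + y) = emeasure \<nu> {0..<x} + emeasure \<nu> {x..<x + y}"
      unfolding F_def using sets_\<nu> by (subst plus_emeasure) auto
    then show ?thesis using shift by (simp add: F_def)
  qed
  have F_mono: "F x \<le> F y" if "x \<le> y" for x y
    unfolding F_def by (rule emeasure_mono) (use that sets_\<nu> in auto)
  have F_nat: "F (real n) = of_nat n * ennreal C" for n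
  proof (induction n)
    case (Suc n)
    have "F (real (Suc n)) = F (real n) + F 1" using F_add[of "real n" 1] by (simp add: add.commute)
    then show ?case using Suc unit by (simp add: F_def algebra_simps)
  qed (simp add: F_def)
  have F_finite: "F d < \<infinity>" for d
  proof -
    obtain n where "d \<le> real n" using real_arch_simple by blast
    then have "F d \<le> F (real n)" by (rule F_mono)
    also have "\<dots> < \<infinity>" by (simp add: F_nat ennreal_of_nat_eq_real_of_nat ennreal_mult_less_top)
    finally show ?thesis .
  qed
  define G where "G d = enn2real (F d)" for d
  have "G (x + y) = G x + G y" if "0 \<le> x" "0 \<le> y" for x y
    unfolding G_def F_add[OF that] by (rule enn2real_plus) (use F_finite in auto)
  moreover have "G x \<le> G y" if "0 \<le> x" "x \<le> y" for x y
    using F_mono[OF that(2)] F_finite unfolding G_def by (intro enn2real_mono) auto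
  moreover have "G 1 = C" using unit \<open>0 \<le> C\<close> by (simp add: G_def F_def)
  ultimately have "G d = C * d" using additive_mono_imp_linear[of G d] \<open>0 \<le> d\<close> by simp
  moreover have "F d = ennreal (G d)"
    using F_finite[of d] by (simp add: G_def ennreal_enn2real_if less_top[symmetric])
  ultimately show ?thesis using shift by simp
qed

lemma translation_invariant_emeasure_greaterThanLessThan:
  fixes \<nu> :: "real measure"
  assumes sets_\<nu>: "sets \<nu> = sets borel"
    and inv: "\<And>\<tau> B. B \<in> sets borel \<Longrightarrow> emeasure \<nu> ((\<lambda>x. x + \<tau>) -` B) = emeasure \<nu> B"
    and unit: "emeasure \<nu> {0..<1} = ennreal C" and "0 < C" and "a \<le> b"
  shows "emeasure \<nu> {a<..<b} = ennreal (C * (b - a))"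
proof -
  note half_open = translation_invariant_emeasure_atLeastLessThan[OF sets_\<nu> inv unit less_imp_le[OF \<open>0 < C\<close>]]
  have small: "emeasure \<nu> {a} \<le> ennreal e" if "e > 0" for e
  proof -
    have "emeasure \<nu> {a} \<le> emeasure \<nu> {a..<a + e / C}"
      by (rule emeasure_mono) (use sets_\<nu> \<open>e > 0\<close> \<open>0 < C\<close> in auto)
    also have "\<dots> = ennreal e" using half_open[of "e / C" a] \<open>e > 0\<close> \<open>0 < C\<close> by simp
    finally show ?thesis .
  qed
  have "emeasure \<nu> {a} \<le> 0"
    by (rule ennreal_le_epsilon) (simp add: small)
  then have "emeasure \<nu> {a} = 0" by simp
  moreover have "{a<..<b} = {a..<a + (b - a)} - {a}" by auto
  ultimately show ?thesis
    using half_open[of "b - a" a] sets_\<nu> \<open>a \<le> b\<close> by (simp add: emeasure_Diff_null_set null_sets_def)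
qed

theorem translation_invariant_eq_density_lborel:
  fixes \<nu> :: "real measure"
  assumes sets_\<nu>: "sets \<nu> = sets borel"
    and inv: "\<And>\<tau> B. B \<in> sets borel \<Longrightarrow> emeasure \<nu> ((\<lambda>x. x + \<tau>) -` B) = emeasure \<nu> B"
    and unit: "emeasure \<nu> {0..<1} = ennreal C" and "C > 0"
  shows "\<nu> = density lborel (\<lambda>_. ennreal C)"
proof -
  have lborel_eq: "lborel = density \<nu> (\<lambda>_. ennreal (1 / C))"
  proof (rule lborel_eqI)
    fix l u :: real assume "\<And>b. b \<in> Basis \<Longrightarrow> l \<bullet> b \<le> u \<bullet> b"
    then have "l \<le> u" by simp
    have "emeasure (density \<nu> (\<lambda>_. ennreal (1 / C))) (box l u) = ennreal (1 / C) * emeasure \<nu> {l<..<u}"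
      using sets_\<nu> by (subst emeasure_density) (auto simp: box_real nn_integral_cmult_indicator)
    also have "\<dots> = ennreal (u - l)"
      using translation_invariant_emeasure_greaterThanLessThan[OF sets_\<nu> inv unit \<open>C > 0\<close> \<open>l \<le> u\<close>]
        \<open>C > 0\<close> \<open>l \<le> u\<close>
      by (simp add: ennreal_mult'[symmetric])
    finally show "emeasure (density \<nu> (\<lambda>_. ennreal (1 / C))) (box l u) = (\<Prod>b\<in>Basis. (u - l) \<bullet> b)"
      by simp
  qed (use sets_\<nu> in simp)
  have "density lborel (\<lambda>_. ennreal C) = density (density \<nu> (\<lambda>_. ennreal (1 / C))) (\<lambda>_. ennreal C)"
    by (simp flip: lborel_eq)
  also have "\<dots> = density \<nu> (\<lambda>_. ennreal (1 / C) * ennreal C)"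
    by (subst density_density_eq) (use sets_\<nu> in auto)
  also have "\<dots> = \<nu>"
    using \<open>C > 0\<close> by (simp add: ennreal_mult'[symmetric] density_1)
  finally show ?thesis by simp
qed

section \<open>Gaussian marginals\<close>

lemma integrable_gaussian_kernel:
  fixes m v :: real
  assumes "v > 0"
  shows "integrable lborel (\<lambda>t. exp (- ((t - m)^2) / (2 * v)))"
proof -
  have "(\<lambda>t. exp (- ((t - m)^2) / (2 * v))) = (\<lambda>t. sqrt (2 * pi * v) * normal_density m (sqrt v) t)"
    using assms by (simp add: normal_density_def)
  then show ?thesis
    using assms by (simp add: integrable_normal_density)
qed

lemma nn_integral_lborel_translate:
  fixes f :: "'a::euclidean_space \<Rightarrow> ennreal"
  assumes "f \<in> borel_measurable borel"
  shows "(\<integral>\<^sup>+x. f x \<partial>lborel) = (\<integral>\<^sup>+x. f (c + x) \<partial>lborel)"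
proof -
  have "(\<integral>\<^sup>+x. f x \<partial>lborel) = (\<integral>\<^sup>+x. f x \<partial>distr lborel borel ((+) c))"
    by (simp add: lborel_distr_plus)
  also have "\<dots> = (\<integral>\<^sup>+x. f (c + x) \<partial>lborel)"
    using assms by (simp add: nn_integral_distr)
  finally show ?thesis .
qed

lemma AE_lborel_ex:
  fixes P :: "'a::euclidean_space \<Rightarrow> bool"
  assumes "AE x in lborel. P x"
  shows "\<exists>x. P x"
  by (rule eventually_happens'[OF _ assms]) (simp add: ae_filter_eq_bot_iff)

locale pos_def_operator =
  fixes A :: "'a::euclidean_space \<Rightarrow> 'a"
  assumes linear: "linear A"
    and symmetric: "\<And>x y. x \<bullet> A y = A x \<bullet> y"
    and pos_def: "\<And>x. x \<noteq> 0 \<Longrightarrow> x \<bullet> A x > 0"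
begin

lemma continuous_on_A: "continuous_on S A"
  using linear by (simp add: linear_continuous_on linear_conv_bounded_linear)

lemma borel_measurable_A [measurable]: "A \<in> borel_measurable borel"
  by (rule borel_measurable_continuous_onI[OF continuous_on_A])

lemma quadratic_form_lower_bound: "\<exists>l>0. \<forall>x. l * (norm x)^2 \<le> x \<bullet> A x"
proof -
  have "continuous_on (sphere (0::'a) 1) (\<lambda>x. x \<bullet> A x)"
    by (intro continuous_intros continuous_on_A)
  from continuous_attains_inf[OF compact_sphere _ this]
  obtain x0 where x0: "x0 \<in> sphere 0 1" "\<And>y. y \<in> sphere 0 1 \<Longrightarrow> x0 \<bullet> A x0 \<le> y \<bullet> A y"
    by auto
  have "(x0 \<bullet> A x0) * (norm x)^2 \<le> x \<bullet> A x" for x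
  proof (cases "x = 0")
    case False
    define y where "y = (1 / norm x) *\<^sub>R x"
    have "y \<in> sphere 0 1" using False by (simp add: y_def)
    moreover have "x = norm x *\<^sub>R y" using False by (simp add: y_def)
    then have "x \<bullet> A x = (norm x)^2 * (y \<bullet> A y)"
      using linear by (metis inner_scaleR_left inner_scaleR_right linear_scale power2_eq_square mult.assoc)
    ultimately show ?thesis using mult_right_mono[OF x0(2), of y "(norm x)^2"]
      by (simp add: mult.commute)
  qed (simp add: linear_0[OF linear])
  moreover have "x0 \<noteq> 0" using x0(1) by auto
  then have "x0 \<bullet> A x0 > 0" by (rule pos_def)
  ultimately show ?thesis by blast
qed

lemma nn_integral_gaussian_finite: "(\<integral>\<^sup>+x. ennreal (exp (- (x \<bullet> A x) / 2)) \<partial>lborel) < \<infinity>"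
proof -
  obtain l where "l > 0" and l: "\<And>x. l * (norm x)^2 \<le> x \<bullet> A x"
    using quadratic_form_lower_bound by blast
  text \<open>Dominate by a product of one-dimensional Gaussians in the coordinates.\<close>
  have "exp (- (x \<bullet> A x) / 2) \<le> (\<Prod>b\<in>Basis. exp (- (l * (x \<bullet> b)^2) / 2))" for x
  proof -
    have "(norm x)^2 = (\<Sum>b\<in>Basis. (x \<bullet> b) * (x \<bullet> b))"
      by (simp add: dot_square_norm[symmetric] euclidean_inner[of x x])
    then have "(norm x)^2 = (\<Sum>b\<in>Basis. (x \<bullet> b)^2)"
      by (simp add: power2_eq_square)
    then have "(\<Prod>b\<in>Basis. exp (- (l * (x \<bullet> b)^2) / 2)) = exp (- (l * (norm x)^2) / 2)"
      by (simp add: exp_sum[symmetric] sum_divide_distrib[symmetric] sum_distrib_left sum_negf)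
    then show ?thesis using l[of x] by simp
  qed
  then have "(\<integral>\<^sup>+x. ennreal (exp (- (x \<bullet> A x) / 2)) \<partial>lborel)
      \<le> (\<integral>\<^sup>+x. (\<Prod>b\<in>Basis. ennreal (exp (- (l * (x \<bullet> b)^2) / 2))) \<partial>(lborel::'a measure))"
    by (intro nn_integral_mono) (simp add: prod_ennreal ennreal_leI)
  also have "\<dots> = (\<Prod>b\<in>(Basis::'a set). (\<integral>\<^sup>+t. ennreal (exp (- (l * t^2) / 2)) \<partial>lborel))"
    by (rule nn_integral_lborel_prod) auto
  also have "\<dots> < \<infinity>"
  proof -
    have "integrable lborel (\<lambda>t. exp (- ((t - 0)^2) / (2 * (1 / l))))"
      using \<open>l > 0\<close> by (intro integrable_gaussian_kernel) simp
    then have "(\<integral>\<^sup>+t. ennreal (exp (- (l * t^2) / 2)) \<partial>lborel) < \<infinity>"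
      by (simp add: integrable_iff_bounded mult.commute)
    then show ?thesis by (simp add: less_top[symmetric] power_eq_top_ennreal)
  qed
  finally show ?thesis .
qed

end

text \<open>A direction \<open>e\<close> with \<open>A e = w\<close>: the Gaussian weight \<open>exp (- x \<bullet> A x / 2)\<close> splits into a
  function of \<open>w \<bullet> x\<close> and a function of the component \<open>residual x\<close>, which is invariant
  under translation along \<open>e\<close>.\<close>
locale gaussian_direction = pos_def_operator +
  fixes e w :: "'a::euclidean_space"
  assumes A_e: "A e = w" and w_e_pos: "0 < w \<bullet> e"
begin

definition residual :: "'a \<Rightarrow> 'a" where
  "residual x = x - ((w \<bullet> x) / (w \<bullet> e)) *\<^sub>R e"

lemma quadratic_form_split: "x \<bullet> A x = (w \<bullet> x)^2 / (w \<bullet> e) + residual x \<bullet> A (residual x)"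
proof -
  define c where "c = (w \<bullet> x) / (w \<bullet> e)"
  have "e \<bullet> A x = w \<bullet> x" using symmetric[of e x] A_e by (simp add: inner_commute)
  moreover have "residual x \<bullet> A (residual x) = (x - c *\<^sub>R e) \<bullet> (A x - c *\<^sub>R w)"
    using linear by (simp add: residual_def c_def linear_diff linear_scale A_e)
  ultimately show ?thesis
    using w_e_pos by (simp add: c_def inner_diff_left inner_diff_right inner_commute field_simps power2_eq_square)
qed

lemma residual_shift: "residual (c *\<^sub>R e + x) = residual x"
  using w_e_pos by (simp add: residual_def inner_add_right field_simps scaleR_add_left[symmetric]
      del: scaleR_add_left)

definition residual_density :: "'a \<Rightarrow> real" where
  "residual_density x = exp (- (residual x \<bullet> A (residual x)) / 2)"

lemma residual_density_measurable [measurable]: "residual_density \<in> borel_measurable borel"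
  unfolding residual_density_def[abs_def] residual_def[abs_def] by measurable

definition projected_measure :: "real measure" where
  "projected_measure = distr (density lborel (\<lambda>x. ennreal (residual_density x))) borel (\<lambda>x. w \<bullet> x)"

lemma sets_projected_measure [measurable_cong]: "sets projected_measure = sets borel"
  by (simp add: projected_measure_def)

lemma emeasure_projected_measure:
  assumes [measurable]: "B \<in> sets borel"
  shows "emeasure projected_measure B = (\<integral>\<^sup>+x. ennreal (residual_density x) * indicator B (w \<bullet> x) \<partial>lborel)"
proof -
  have "(\<lambda>x. w \<bullet> x) \<in> borel_measurable borel" by simp
  from measurable_sets_borel[OF this assms] have "(\<lambda>x. w \<bullet> x) -` B \<in> sets borel" .
  then show ?thesis
    unfolding projected_measure_def
    by (subst emeasure_distr) (auto simp: emeasure_density indicator_vimage[symmetric])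
qed

lemma projected_measure_translation_invariant:
  assumes [measurable]: "B \<in> sets borel"
  shows "emeasure projected_measure ((\<lambda>t. t + \<tau>) -` B) = emeasure projected_measure B"
proof -
  define c where "c = (\<tau> / (w \<bullet> e)) *\<^sub>R e"
  define f where "f x = ennreal (residual_density x) * indicator B (w \<bullet> x)" for x
  have [measurable]: "f \<in> borel_measurable borel" unfolding f_def by measurable
  have "f (c + x) = ennreal (residual_density x) * indicator B (w \<bullet> x + \<tau>)" for x
  proof -
    have "residual (c + x) = residual x" unfolding c_def by (rule residual_shift)
    moreover have "w \<bullet> (c + x) = w \<bullet> x + \<tau>"
      using w_e_pos by (simp add: c_def inner_add_right)
    ultimately show ?thesis by (simp add: f_def residual_density_def)
  qed
  moreover have "(\<lambda>t. t + \<tau>) -` B \<in> sets borel"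
    by (rule measurable_sets_borel[OF _ assms]) simp
  ultimately have "emeasure projected_measure ((\<lambda>t. t + \<tau>) -` B) = (\<integral>\<^sup>+x. f (c + x) \<partial>lborel)"
    by (subst emeasure_projected_measure) (auto simp: indicator_def)
  also have "\<dots> = (\<integral>\<^sup>+x. f x \<partial>lborel)"
    by (rule nn_integral_lborel_translate[symmetric]) simp
  also have "\<dots> = emeasure projected_measure B"
    by (simp add: emeasure_projected_measure f_def)
  finally show ?thesis .
qed

lemma projected_measure_unit_finite: "emeasure projected_measure {0..<1} < \<infinity>"
proof -
  define v where "v = w \<bullet> e"
  have "ennreal (residual_density x) * indicator {0..<1} (w \<bullet> x)
      \<le> ennreal (exp (1 / (2 * v))) * ennreal (exp (- (x \<bullet> A x) / 2))" for x
  proof (cases "w \<bullet> x \<in> {0..<1}")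
    case True
    then have "(w \<bullet> x)^2 / (2 * v) \<le> 1 / (2 * v)"
      using w_e_pos by (simp add: v_def power_le_one divide_right_mono)
    moreover have "- (residual x \<bullet> A (residual x)) / 2 = - (x \<bullet> A x) / 2 + (w \<bullet> x)^2 / (2 * v)"
      using quadratic_form_split[of x] w_e_pos by (simp add: v_def field_simps)
    ultimately have "residual_density x \<le> exp (- (x \<bullet> A x) / 2 + 1 / (2 * v))"
      by (simp add: residual_density_def)
    then show ?thesis using True by (simp add: ennreal_mult[symmetric] ennreal_leI exp_add[symmetric])
  qed simp
  then have "emeasure projected_measure {0..<1}
      \<le> (\<integral>\<^sup>+x. ennreal (exp (1 / (2 * v))) * ennreal (exp (- (x \<bullet> A x) / 2)) \<partial>lborel)"
    by (subst emeasure_projected_measure) (auto intro: nn_integral_mono)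
  also have "\<dots> < \<infinity>"
    using nn_integral_gaussian_finite by (simp add: nn_integral_cmult ennreal_mult_less_top)
  finally show ?thesis .
qed

lemma projected_measure_unit_pos: "emeasure projected_measure {0..<1} \<noteq> 0"
proof
  assume unit_null: "emeasure projected_measure {0..<1} = 0"
  have "{real_of_int n..<real_of_int n + 1} \<in> null_sets projected_measure" for n
  proof -
    have "{real_of_int n..<real_of_int n + 1} = (\<lambda>t. t + (- real_of_int n)) -` {0..<1}" by auto
    then have "emeasure projected_measure {real_of_int n..<real_of_int n + 1} = 0"
      using projected_measure_translation_invariant[of "{0..<1}" "- real_of_int n"] unit_null by simp
    then show ?thesis by (simp add: null_sets_def sets_projected_measure)
  qed
  then have "(\<Union>n::int. {real_of_int n..<real_of_int n + 1}) \<in> null_sets projected_measure"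
    by (intro null_sets_UN') auto
  moreover have "(\<Union>n::int. {real_of_int n..<real_of_int n + 1}) = UNIV"
  proof safe
    fix x :: real
    show "x \<in> (\<Union>n. {real_of_int n..<real_of_int n + 1})"
      by (rule UN_I[of "\<lfloor>x\<rfloor>"]) simp_all
  qed auto
  ultimately have "(\<integral>\<^sup>+x. ennreal (residual_density x) \<partial>lborel) = 0"
    using emeasure_projected_measure[of UNIV] by (simp add: null_sets_def)
  then have "AE x in lborel. ennreal (residual_density x) = 0"
    by (subst (asm) nn_integral_0_iff_AE) auto
  then show False
    using AE_lborel_ex by (force simp: residual_density_def)
qed

lemma projected_measure_eq_density_lborel:
  obtains C where "C > 0" and "projected_measure = density lborel (\<lambda>_. ennreal C)"
proof -
  obtain C where C: "emeasure projected_measure {0..<1} = ennreal C" "C > 0"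
    using projected_measure_unit_finite projected_measure_unit_pos
    by (cases "emeasure projected_measure {0..<1}" rule: ennreal_cases) (auto simp: less_le)
  then show ?thesis
    using that translation_invariant_eq_density_lborel[OF sets_projected_measure
        projected_measure_translation_invariant C] by blast
qed

lemma nn_integral_gaussian_marginal_centered:
  assumes projected: "projected_measure = density lborel (\<lambda>_. ennreal C)"
    and [measurable]: "g \<in> borel_measurable borel"
  shows "(\<integral>\<^sup>+x. g (w \<bullet> x) * ennreal (exp (- (x \<bullet> A x) / 2)) \<partial>lborel)
    = ennreal C * (\<integral>\<^sup>+t. g t * ennreal (exp (- (t^2) / (2 * (w \<bullet> e)))) \<partial>lborel)"
proof -
  define G where "G t = g t * ennreal (exp (- (t^2) / (2 * (w \<bullet> e))))" for t
  have [measurable]: "G \<in> borel_measurable borel" unfolding G_def by measurable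
  have "g (w \<bullet> x) * ennreal (exp (- (x \<bullet> A x) / 2)) = ennreal (residual_density x) * G (w \<bullet> x)" for x
  proof -
    have "- (x \<bullet> A x) / 2 = - (residual x \<bullet> A (residual x)) / 2 + - ((w \<bullet> x)^2) / (2 * (w \<bullet> e))"
      using quadratic_form_split[of x] by simp
    then have "exp (- (x \<bullet> A x) / 2) = residual_density x * exp (- ((w \<bullet> x)^2) / (2 * (w \<bullet> e)))"
      by (simp add: residual_density_def exp_add[symmetric])
    then show ?thesis by (simp add: G_def ennreal_mult mult_ac residual_density_def)
  qed
  then have "(\<integral>\<^sup>+x. g (w \<bullet> x) * ennreal (exp (- (x \<bullet> A x) / 2)) \<partial>lborel)
      = (\<integral>\<^sup>+t. G t \<partial>projected_measure)"
    unfolding projected_measure_def by (simp add: nn_integral_distr nn_integral_density)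
  also have "\<dots> = ennreal C * (\<integral>\<^sup>+t. G t \<partial>lborel)"
    by (simp add: projected nn_integral_density nn_integral_cmult)
  finally show ?thesis by (simp add: G_def)
qed

theorem nn_integral_gaussian_marginal:
  obtains C where "C > 0" and
    "\<And>g c. g \<in> borel_measurable borel \<Longrightarrow>
       (\<integral>\<^sup>+x. g (w \<bullet> x) * ennreal (exp (- ((x - c) \<bullet> A (x - c)) / 2)) \<partial>lborel)
       = ennreal C * (\<integral>\<^sup>+t. g t * ennreal (exp (- ((t - w \<bullet> c)^2) / (2 * (w \<bullet> e)))) \<partial>lborel)"
proof -
  obtain C where "C > 0" and projected: "projected_measure = density lborel (\<lambda>_. ennreal C)"
    using projected_measure_eq_density_lborel by blast
  have "(\<integral>\<^sup>+x. g (w \<bullet> x) * ennreal (exp (- ((x - c) \<bullet> A (x - c)) / 2)) \<partial>lborel)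
       = ennreal C * (\<integral>\<^sup>+t. g t * ennreal (exp (- ((t - w \<bullet> c)^2) / (2 * (w \<bullet> e)))) \<partial>lborel)"
    if [measurable]: "g \<in> borel_measurable borel" for g c
  proof -
    have "(\<integral>\<^sup>+x. g (w \<bullet> x) * ennreal (exp (- ((x - c) \<bullet> A (x - c)) / 2)) \<partial>lborel)
        = (\<integral>\<^sup>+x. g (w \<bullet> x + w \<bullet> c) * ennreal (exp (- (x \<bullet> A x) / 2)) \<partial>lborel)"
      by (subst nn_integral_lborel_translate[where c=c]) (simp_all add: inner_add_right add.commute)
    also have "\<dots> = ennreal C * (\<integral>\<^sup>+t. g (t + w \<bullet> c) * ennreal (exp (- (t^2) / (2 * (w \<bullet> e)))) \<partial>lborel)"
      by (rule nn_integral_gaussian_marginal_centered[OF projected]) simp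
    also have "(\<integral>\<^sup>+t. g (t + w \<bullet> c) * ennreal (exp (- (t^2) / (2 * (w \<bullet> e)))) \<partial>lborel)
        = (\<integral>\<^sup>+t. g t * ennreal (exp (- ((t - w \<bullet> c)^2) / (2 * (w \<bullet> e)))) \<partial>lborel)"
      by (subst nn_integral_lborel_translate[where c="w \<bullet> c"]) (simp_all add: add.commute)
    finally show ?thesis .
  qed
  with \<open>C > 0\<close> show ?thesis using that by blast
qed

end

section \<open>Symmetric positive definite matrices\<close>

lemma inner_matrix_vector_symmetric:
  fixes P :: "real^'d^'d"
  assumes "transpose P = P"
  shows "u \<bullet> (P *v v) = (P *v u) \<bullet> v"
  by (metis assms dot_lmul_matrix vector_transpose_matrix)

lemma spd_quadratic_form_nonneg: "spd S \<Longrightarrow> 0 \<le> x \<bullet> (S *v x)"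
  unfolding spd_def by (cases "x = 0") (auto simp: less_imp_le)

lemma pos_def_matrix_invertible:
  fixes S :: "real^'d^'d"
  assumes "\<And>x. x \<noteq> 0 \<Longrightarrow> x \<bullet> (S *v x) > 0"
  shows "invertible S"
proof -
  have "x = 0" if "S *v x = 0" for x
    using assms[of x] that by (cases "x = 0") auto
  then show ?thesis
    using matrix_left_invertible_ker invertible_left_inverse by blast
qed

lemma spd_det_pos:
  fixes S :: "real^'d^'d"
  assumes "spd S"
  shows "det S > 0"
proof -
  text \<open>The segment from \<open>S\<close> to the identity stays positive definite, hence invertible,
    so the continuous function \<open>det\<close> cannot change sign along it.\<close>
  define M where "M t = (1 - t) *\<^sub>R S + t *\<^sub>R (mat 1 :: real^'d^'d)" for t :: real
  have det_nonzero: "det (M t) \<noteq> 0" if "0 \<le> t" "t \<le> 1" for t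
  proof -
    have "x \<bullet> (M t *v x) > 0" if "x \<noteq> 0" for x
    proof -
      have "x \<bullet> (M t *v x) = (1 - t) * (x \<bullet> (S *v x)) + t * (x \<bullet> x)"
        by (simp add: M_def matrix_vector_mult_add_rdistrib scaleR_matrix_vector_assoc[symmetric] inner_add_right)
      moreover have "x \<bullet> (S *v x) > 0" "x \<bullet> x > 0"
        using assms \<open>x \<noteq> 0\<close> by (auto simp: spd_def)
      ultimately show ?thesis
        using \<open>0 \<le> t\<close> \<open>t \<le> 1\<close> by (cases "t = 1") (auto intro: add_pos_nonneg)
    qed
    then show ?thesis
      using pos_def_matrix_invertible invertible_det_nz by blast
  qed
  have "continuous_on {0..1} (\<lambda>t. det (M t))"
    unfolding det_def M_def by (intro continuous_intros)
  moreover have "M 0 = S" "M 1 = mat 1" by (simp_all add: M_def)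
  ultimately show ?thesis
    using IVT'[of "\<lambda>t. det (M t)" 0 0 1] det_nonzero by force
qed

lemma
  assumes "spd S"
  shows spd_matrix_inv_right: "S ** matrix_inv S = mat 1"
    and spd_matrix_inv_left: "matrix_inv S ** S = mat 1"
proof -
  have "invertible S" using assms by (intro pos_def_matrix_invertible) (simp add: spd_def)
  then have "S ** matrix_inv S = mat 1 \<and> matrix_inv S ** S = mat 1"
    unfolding matrix_inv_def invertible_def by (rule someI_ex)
  then show "S ** matrix_inv S = mat 1" "matrix_inv S ** S = mat 1" by auto
qed

lemma spd_matrix_inv:
  assumes "spd S"
  shows "spd (matrix_inv S)"
proof -
  define P where "P = matrix_inv S"
  have SP: "S ** P = mat 1" and PS: "P ** S = mat 1"
    using spd_matrix_inv_right[OF assms] spd_matrix_inv_left[OF assms] by (simp_all add: P_def)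
  have "transpose P ** S = mat 1"
    using arg_cong[OF SP, of transpose] assms by (simp add: spd_def matrix_transpose_mul)
  then have "transpose P = P"
    using SP by (metis matrix_mul_assoc matrix_mul_lid matrix_mul_rid)
  moreover have "x \<bullet> (P *v x) > 0" if "x \<noteq> 0" for x
  proof -
    have "S *v (P *v x) = x" using SP by (simp add: matrix_vector_mul_assoc)
    then have "P *v x \<noteq> 0" "x \<bullet> (P *v x) = (P *v x) \<bullet> (S *v (P *v x))"
      using \<open>x \<noteq> 0\<close> by (auto simp: inner_commute)
    then show ?thesis using assms by (simp add: spd_def)
  qed
  ultimately show ?thesis by (simp add: spd_def P_def)
qed

definition block_diag :: "real^'n^'n \<Rightarrow> real^'m^'m \<Rightarrow> (real^'n) \<times> (real^'m) \<Rightarrow> (real^'n) \<times> (real^'m)" where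
  "block_diag P1 P2 x = (P1 *v fst x, P2 *v snd x)"

lemma pos_def_operator_block_diag:
  assumes "spd P1" "spd P2"
  shows "pos_def_operator (block_diag P1 P2)"
proof (rule pos_def_operator.intro)
  show "linear (block_diag P1 P2)"
    by (rule linearI) (auto simp: block_diag_def matrix_vector_right_distrib matrix_vector_mult_scaleR)
  show "x \<bullet> block_diag P1 P2 y = block_diag P1 P2 x \<bullet> y" for x y
    using assms by (simp add: block_diag_def inner_prod_def spd_def inner_matrix_vector_symmetric)
  show "x \<bullet> block_diag P1 P2 x > 0" if "x \<noteq> 0" for x
  proof -
    have "x \<bullet> block_diag P1 P2 x = fst x \<bullet> (P1 *v fst x) + snd x \<bullet> (P2 *v snd x)"
      by (simp add: block_diag_def inner_prod_def)
    moreover have "fst x \<noteq> 0 \<or> snd x \<noteq> 0" using that by (auto simp: prod_eq_iff)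
    ultimately show ?thesis
      using assms spd_quadratic_form_nonneg[OF assms(1), of "fst x"] spd_quadratic_form_nonneg[OF assms(2), of "snd x"]
      by (auto simp: spd_def add_pos_nonneg add_nonneg_pos)
  qed
qed

section \<open>The score in one environment\<close>

lemma matrix_vector_mult_measurable [measurable]:
  fixes P :: "real^'n^'m"
  assumes "f \<in> borel_measurable M"
  shows "(\<lambda>x. P *v f x) \<in> borel_measurable M"
  using borel_measurable_continuous_on[OF _ assms, of "\<lambda>x. P *v x"] by (simp add: linear_continuous_on)

lemma gauss_pdf_measurable [measurable]: "gauss_pdf m S \<in> borel_measurable borel"
  unfolding gauss_pdf_def[abs_def] by measurable

lemma gauss_pdf_mult_block_diag:
  fixes S1 :: "real^'n^'n" and S2 :: "real^'m^'m"
  shows "gauss_pdf m1 S1 x1 * gauss_pdf m2 S2 x2 =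
    exp (- (((x1, x2) - (m1, m2)) \<bullet> block_diag (matrix_inv S1) (matrix_inv S2) ((x1, x2) - (m1, m2))) / 2)
    / (sqrt ((2 * pi) ^ CARD('n) * det S1) * sqrt ((2 * pi) ^ CARD('m) * det S2))"
  by (simp add: gauss_pdf_def block_diag_def inner_prod_def exp_add[symmetric] add_divide_distrib)

lemma measurable_bool_pair:
  fixes F :: "bool \<Rightarrow> 'a \<Rightarrow> 'b::topological_space"
  assumes "\<And>y. F y \<in> borel_measurable N"
  shows "(\<lambda>z. F (fst z) (snd z)) \<in> borel_measurable (count_space UNIV \<Otimes>\<^sub>M N)"
  by (rule measurable_compose_countable'[where f="\<lambda>y z. F y (snd z)" and g=fst and I=UNIV])
    (auto intro: measurable_compose[OF measurable_snd assms])

lemma nn_integral_count_space_bool_pair: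
  fixes F :: "bool \<Rightarrow> 'a \<Rightarrow> ennreal"
  assumes "sigma_finite_measure N" and "\<And>y. F y \<in> borel_measurable N"
  shows "(\<integral>\<^sup>+z. F (fst z) (snd z) \<partial>(count_space UNIV \<Otimes>\<^sub>M N)) = (\<Sum>y\<in>UNIV. \<integral>\<^sup>+x. F y x \<partial>N)"
proof -
  have "(\<integral>\<^sup>+z. F (fst z) (snd z) \<partial>(count_space UNIV \<Otimes>\<^sub>M N))
      = (\<integral>\<^sup>+y. (\<integral>\<^sup>+x. F y x \<partial>N) \<partial>count_space UNIV)"
    using measurable_bool_pair[OF assms(2)]
    by (simp add: sigma_finite_measure.nn_integral_fst[OF assms(1), symmetric])
  also have "\<dots> = (\<Sum>y\<in>UNIV. \<integral>\<^sup>+x. F y x \<partial>N)"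
    by (rule nn_integral_count_space_finite) simp
  finally show ?thesis .
qed

locale linear_score_env =
  fixes eta :: real
    and mu_ns :: "real^'ns" and S_ns :: "real^'ns^'ns"
    and mu :: "real^'sp" and S :: "real^'sp^'sp"
    and w_ns :: "real^'ns" and w_sp :: "real^'sp" and b :: real
  assumes eta: "0 \<le> eta" "eta \<le> 1"
    and spd_ns: "spd S_ns" and spd_sp: "spd S"
    and weight_nonzero: "w_ns \<noteq> 0 \<or> w_sp \<noteq> 0"
begin

definition score :: "(real^'ns) \<times> (real^'sp) \<Rightarrow> real" where
  "score x = w_ns \<bullet> fst x + w_sp \<bullet> snd x - b"

definition score_mean :: real where
  "score_mean = w_ns \<bullet> mu_ns + w_sp \<bullet> mu"

definition score_var :: real where
  "score_var = w_ns \<bullet> (S_ns *v w_ns) + w_sp \<bullet> (S *v w_sp)"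

text \<open>Up to normalisation, the density of the score given the label \<open>y\<close>.\<close>
definition score_kernel :: "bool \<Rightarrow> real \<Rightarrow> real" where
  "score_kernel y t = exp (- ((t - (lab y * score_mean - b))^2) / (2 * score_var))"

lemma score_measurable [measurable]: "score \<in> borel_measurable (lborel \<Otimes>\<^sub>M lborel)"
  unfolding score_def[abs_def] by measurable

lemma score_kernel_measurable [measurable]: "score_kernel y \<in> borel_measurable borel"
  unfolding score_kernel_def[abs_def] by measurable

lemma score_var_pos: "score_var > 0"
  using weight_nonzero spd_ns spd_sp spd_quadratic_form_nonneg[OF spd_ns, of w_ns]
    spd_quadratic_form_nonneg[OF spd_sp, of w_sp]
  by (auto simp: score_var_def spd_def add_pos_nonneg add_nonneg_pos)

lemma score_kernel_pos: "score_kernel y t > 0"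
  by (simp add: score_kernel_def)

lemma integrable_score_kernel: "integrable lborel (score_kernel y)"
  unfolding score_kernel_def[abs_def] using score_var_pos by (rule integrable_gaussian_kernel)

lemma score_kernel_ratio:
  "score_kernel True t = score_kernel False t * exp (2 * score_mean / score_var * (t + b))"
  using score_var_pos
  by (simp add: score_kernel_def lab_def exp_add[symmetric] field_simps power2_eq_square)

lemma nn_integral_score_given_label:
  obtains K where "K > 0" and
    "\<And>y H. H \<in> borel_measurable borel \<Longrightarrow>
      (\<integral>\<^sup>+x. ennreal (gauss_pdf (lab y *\<^sub>R mu_ns) S_ns (fst x) * gauss_pdf (lab y *\<^sub>R mu) S (snd x))
        * H (score x) \<partial>(lborel \<Otimes>\<^sub>M lborel))
      = ennreal K * (\<integral>\<^sup>+t. H t * ennreal (score_kernel y t) \<partial>lborel)"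
proof -
  define A where "A = block_diag (matrix_inv S_ns) (matrix_inv S)"
  define w where "w = (w_ns, w_sp)"
  define e where "e = (S_ns *v w_ns, S *v w_sp)"
  have w_e: "w \<bullet> e = score_var" by (simp add: w_def e_def score_var_def)
  interpret gaussian_direction A e w
  proof (rule gaussian_direction.intro)
    show "pos_def_operator A"
      unfolding A_def by (intro pos_def_operator_block_diag spd_matrix_inv spd_ns spd_sp)
    have "A e = w"
      using spd_matrix_inv_left[OF spd_ns] spd_matrix_inv_left[OF spd_sp]
      by (simp add: A_def block_diag_def e_def w_def matrix_vector_mul_assoc)
    then show "gaussian_direction_axioms A e w"
      using score_var_pos w_e by unfold_locales simp_all
  qed
  obtain C where "C > 0" and marginal: "\<And>g c. g \<in> borel_measurable borel \<Longrightarrow>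
       (\<integral>\<^sup>+x. g (w \<bullet> x) * ennreal (exp (- ((x - c) \<bullet> A (x - c)) / 2)) \<partial>lborel)
       = ennreal C * (\<integral>\<^sup>+t. g t * ennreal (exp (- ((t - w \<bullet> c)^2) / (2 * (w \<bullet> e)))) \<partial>lborel)"
    using nn_integral_gaussian_marginal by blast
  define N where "N = sqrt ((2 * pi) ^ CARD('ns) * det S_ns) * sqrt ((2 * pi) ^ CARD('sp) * det S)"
  have "N > 0" using spd_det_pos[OF spd_ns] spd_det_pos[OF spd_sp] by (simp add: N_def)
  have "(\<integral>\<^sup>+x. ennreal (gauss_pdf (lab y *\<^sub>R mu_ns) S_ns (fst x) * gauss_pdf (lab y *\<^sub>R mu) S (snd x))
        * H (score x) \<partial>(lborel \<Otimes>\<^sub>M lborel))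
      = ennreal (C / N) * (\<integral>\<^sup>+t. H t * ennreal (score_kernel y t) \<partial>lborel)"
    if [measurable]: "H \<in> borel_measurable borel" for y H
  proof -
    define c where "c = (lab y *\<^sub>R mu_ns, lab y *\<^sub>R mu)"
    define g where "g t = H (t - b)" for t
    have g_measurable [measurable]: "g \<in> borel_measurable borel" unfolding g_def by measurable
    have pdf: "gauss_pdf (lab y *\<^sub>R mu_ns) S_ns (fst x) * gauss_pdf (lab y *\<^sub>R mu) S (snd x)
        = 1 / N * exp (- ((x - c) \<bullet> A (x - c)) / 2)" for x
      by (cases x) (simp add: gauss_pdf_mult_block_diag A_def c_def N_def)
    have "ennreal (gauss_pdf (lab y *\<^sub>R mu_ns) S_ns (fst x) * gauss_pdf (lab y *\<^sub>R mu) S (snd x))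
        = ennreal (1 / N) * ennreal (exp (- ((x - c) \<bullet> A (x - c)) / 2))" for x
      unfolding pdf by (rule ennreal_mult') (use \<open>N > 0\<close> in simp)
    then have "ennreal (gauss_pdf (lab y *\<^sub>R mu_ns) S_ns (fst x) * gauss_pdf (lab y *\<^sub>R mu) S (snd x)) * H (score x)
        = ennreal (1 / N) * (g (w \<bullet> x) * ennreal (exp (- ((x - c) \<bullet> A (x - c)) / 2)))" for x
      by (simp add: g_def score_def w_def inner_prod_def mult_ac)
    then have "(\<integral>\<^sup>+x. ennreal (gauss_pdf (lab y *\<^sub>R mu_ns) S_ns (fst x) * gauss_pdf (lab y *\<^sub>R mu) S (snd x))
        * H (score x) \<partial>(lborel \<Otimes>\<^sub>M lborel))
        = ennreal (1 / N) * (ennreal C * (\<integral>\<^sup>+t. g t * ennreal (exp (- ((t - w \<bullet> c)^2) / (2 * (w \<bullet> e)))) \<partial>lborel))"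
      using marginal[OF g_measurable, of c] by (simp add: lborel_prod nn_integral_cmult)
    also have "(\<integral>\<^sup>+t. g t * ennreal (exp (- ((t - w \<bullet> c)^2) / (2 * (w \<bullet> e)))) \<partial>lborel)
        = (\<integral>\<^sup>+t. H t * ennreal (score_kernel y t) \<partial>lborel)"
      by (subst nn_integral_lborel_translate[where c=b])
        (simp_all add: g_def w_e score_kernel_def c_def score_mean_def algebra_simps,
          simp add: w_def inner_prod_def algebra_simps)
    moreover have "ennreal (C / N) = ennreal C * ennreal (1 / N)"
      by (subst ennreal_mult'[symmetric]) (use \<open>C > 0\<close> in simp_all)
    ultimately show ?thesis by (simp add: mult_ac)
  qed
  moreover have "C / N > 0" using \<open>C > 0\<close> \<open>N > 0\<close> by simp
  ultimately show ?thesis using that by blast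
qed

theorem nn_integral_score:
  obtains K where "K > 0" and
    "\<And>H. (\<And>y. H y \<in> borel_measurable borel) \<Longrightarrow>
      (\<integral>\<^sup>+z. H (fst z) (score (snd z)) \<partial>env_measure eta mu_ns S_ns mu S)
      = (\<Sum>y\<in>UNIV. ennreal (K * (if y then eta else 1 - eta)) * (\<integral>\<^sup>+t. H y t * ennreal (score_kernel y t) \<partial>lborel))"
proof -
  obtain K where "K > 0" and given_label: "\<And>y H. H \<in> borel_measurable borel \<Longrightarrow>
      (\<integral>\<^sup>+x. ennreal (gauss_pdf (lab y *\<^sub>R mu_ns) S_ns (fst x) * gauss_pdf (lab y *\<^sub>R mu) S (snd x))
        * H (score x) \<partial>(lborel \<Otimes>\<^sub>M lborel))
      = ennreal K * (\<integral>\<^sup>+t. H t * ennreal (score_kernel y t) \<partial>lborel)"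
    using nn_integral_score_given_label by blast
  define p where "p y = (if y then eta else 1 - eta)" for y
  have "p y \<ge> 0" for y using eta by (simp add: p_def)
  define D where "D y x = ennreal (p y * gauss_pdf (lab y *\<^sub>R mu_ns) S_ns (fst x) * gauss_pdf (lab y *\<^sub>R mu) S (snd x))"
    for y and x :: "(real^'ns) \<times> (real^'sp)"
  have [measurable]: "D y \<in> borel_measurable (lborel \<Otimes>\<^sub>M lborel)" for y
    unfolding D_def by measurable
  have env: "env_measure eta mu_ns S_ns mu S = density (count_space UNIV \<Otimes>\<^sub>M (lborel \<Otimes>\<^sub>M lborel)) (\<lambda>z. D (fst z) (snd z))"
    unfolding env_measure_def D_def p_def by (intro arg_cong2[where f=density] refl ext) (auto split: prod.splits)
  have sigma_finite: "sigma_finite_measure (lborel \<Otimes>\<^sub>M lborel :: ((real^'ns) \<times> (real^'sp)) measure)"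
    by (simp add: lborel_prod lborel.sigma_finite_measure_axioms)
  have "(\<integral>\<^sup>+z. H (fst z) (score (snd z)) \<partial>env_measure eta mu_ns S_ns mu S)
      = (\<Sum>y\<in>UNIV. ennreal (K * p y) * (\<integral>\<^sup>+t. H y t * ennreal (score_kernel y t) \<partial>lborel))"
    if [measurable]: "\<And>y. H y \<in> borel_measurable borel" for H
  proof -
    have "(\<lambda>z. H (fst z) (score (snd z))) \<in> borel_measurable (count_space UNIV \<Otimes>\<^sub>M (lborel \<Otimes>\<^sub>M lborel))"
      by (rule measurable_bool_pair[where F="\<lambda>y x. H y (score x)"]) measurable
    then have "(\<integral>\<^sup>+z. H (fst z) (score (snd z)) \<partial>env_measure eta mu_ns S_ns mu S)
        = (\<integral>\<^sup>+z. D (fst z) (snd z) * H (fst z) (score (snd z)) \<partial>(count_space UNIV \<Otimes>\<^sub>M (lborel \<Otimes>\<^sub>M lborel)))"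
      unfolding env by (intro nn_integral_density measurable_bool_pair) auto
    also have "\<dots> = (\<Sum>y\<in>UNIV. \<integral>\<^sup>+x. D y x * H y (score x) \<partial>(lborel \<Otimes>\<^sub>M lborel))"
      by (rule nn_integral_count_space_bool_pair[OF sigma_finite]) measurable
    also have "\<dots> = (\<Sum>y\<in>UNIV. ennreal (p y) * (ennreal K * (\<integral>\<^sup>+t. H y t * ennreal (score_kernel y t) \<partial>lborel)))"
    proof (rule sum.cong)
      fix y :: bool
      have "D y x = ennreal (p y) * ennreal (gauss_pdf (lab y *\<^sub>R mu_ns) S_ns (fst x) * gauss_pdf (lab y *\<^sub>R mu) S (snd x))" for x
        unfolding D_def mult.assoc by (rule ennreal_mult') fact
      then show "(\<integral>\<^sup>+x. D y x * H y (score x) \<partial>(lborel \<Otimes>\<^sub>M lborel))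
          = ennreal (p y) * (ennreal K * (\<integral>\<^sup>+t. H y t * ennreal (score_kernel y t) \<partial>lborel))"
        by (simp add: mult.assoc nn_integral_cmult given_label)
    qed simp
    moreover have "ennreal (K * p y) = ennreal K * ennreal (p y)" for y
      by (rule ennreal_mult') (use \<open>K > 0\<close> in simp)
    ultimately show ?thesis by (simp add: mult_ac)
  qed
  with \<open>K > 0\<close> show ?thesis using that unfolding p_def by blast
qed

lemma lin_clf_eq_score: "lin_clf sig w_ns w_sp b x = sig (score x)"
  by (cases x) (simp add: lin_clf_def score_def)

lemma integrable_mult_score_kernel:
  assumes "g \<in> borel_measurable borel" "\<And>t. \<bar>g t\<bar> \<le> 1"
  shows "integrable lborel (\<lambda>t. g t * score_kernel y t)"
proof (rule Bochner_Integration.integrable_bound[OF integrable_score_kernel[of y]])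
  have "norm (g t * score_kernel y t) \<le> norm (score_kernel y t)" for t
    using assms(2)[of t] score_kernel_pos[of y t] by (simp add: abs_mult mult_left_le_one_le)
  then show "AE t in lborel. norm (g t * score_kernel y t) \<le> norm (score_kernel y t)" by simp
qed (use assms(1) in simp)

lemma integral_score:
  obtains K where "K > 0" and
    "\<And>H. (\<And>y. H y \<in> borel_measurable borel) \<Longrightarrow> (\<And>y t. 0 \<le> H y t) \<Longrightarrow> (\<And>y t. H y t \<le> 1) \<Longrightarrow>
      (\<integral>z. H (fst z) (score (snd z)) \<partial>env_measure eta mu_ns S_ns mu S)
      = K * eta * (\<integral>t. H True t * score_kernel True t \<partial>lborel)
        + K * (1 - eta) * (\<integral>t. H False t * score_kernel False t \<partial>lborel)"
proof -
  obtain K where "K > 0" and nn: "\<And>H. (\<And>y. H y \<in> borel_measurable borel) \<Longrightarrow>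
      (\<integral>\<^sup>+z. H (fst z) (score (snd z)) \<partial>env_measure eta mu_ns S_ns mu S)
      = (\<Sum>y\<in>UNIV. ennreal (K * (if y then eta else 1 - eta)) * (\<integral>\<^sup>+t. H y t * ennreal (score_kernel y t) \<partial>lborel))"
    using nn_integral_score by blast
  have "(\<integral>z. H (fst z) (score (snd z)) \<partial>env_measure eta mu_ns S_ns mu S)
      = K * eta * (\<integral>t. H True t * score_kernel True t \<partial>lborel)
        + K * (1 - eta) * (\<integral>t. H False t * score_kernel False t \<partial>lborel)"
    if H [measurable]: "\<And>y. H y \<in> borel_measurable borel" and H_bounds: "\<And>y t. 0 \<le> H y t" "\<And>y t. H y t \<le> 1"
    for H
  proof -
    define I where "I y = (\<integral>t. H y t * score_kernel y t \<partial>lborel)" for y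
    have I_nonneg: "0 \<le> I y" for y
      unfolding I_def using H_bounds score_kernel_pos by (intro integral_nonneg_AE AE_I2) (simp add: less_imp_le)
    have "(\<integral>\<^sup>+t. ennreal (H y t) * ennreal (score_kernel y t) \<partial>lborel) = ennreal (I y)" for y
      unfolding I_def using H_bounds score_kernel_pos
      by (subst nn_integral_eq_integral[symmetric])
        (auto simp: ennreal_mult less_imp_le intro!: integrable_mult_score_kernel)
    moreover have "(\<lambda>z. H (fst z) (score (snd z))) \<in> borel_measurable (env_measure eta mu_ns S_ns mu S)"
      unfolding env_measure_def measurable_cong_sets[OF sets_density refl]
      by (rule measurable_bool_pair[where F="\<lambda>y x. H y (score x)"]) measurable
    ultimately have "(\<integral>z. H (fst z) (score (snd z)) \<partial>env_measure eta mu_ns S_ns mu S)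
        = enn2real (\<Sum>y\<in>UNIV. ennreal (K * (if y then eta else 1 - eta)) * ennreal (I y))"
      using nn[of "\<lambda>y t. ennreal (H y t)"] H_bounds
      by (subst integral_eq_nn_integral) auto
    also have "\<dots> = K * eta * I True + K * (1 - eta) * I False"
      using \<open>K > 0\<close> eta I_nonneg by (simp add: UNIV_bool ennreal_mult'[symmetric] ennreal_plus[symmetric] del: ennreal_plus)
    finally show ?thesis by (simp add: I_def)
  qed
  with \<open>K > 0\<close> that show ?thesis by blast
qed

lemma calibrated_preimage_integrals_eq:
  assumes [measurable]: "sig \<in> borel_measurable borel"
    and sig_bounds: "\<And>t. 0 \<le> sig t" "\<And>t. sig t \<le> 1"
    and calib: "calibrated_on (lin_clf sig w_ns w_sp b) (env_measure eta mu_ns S_ns mu S)"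
    and [measurable]: "A \<in> sets borel"
  shows "(\<integral>t. indicator (sig -` A) t * (eta * (1 - sig t) * score_kernel True t) \<partial>lborel)
    = (\<integral>t. indicator (sig -` A) t * ((1 - eta) * sig t * score_kernel False t) \<partial>lborel)"
proof -
  let ?M = "env_measure eta mu_ns S_ns mu S"
  obtain K where "K > 0" and integral: "\<And>H. (\<And>y. H y \<in> borel_measurable borel) \<Longrightarrow> (\<And>y t. 0 \<le> H y t) \<Longrightarrow> (\<And>y t. H y t \<le> 1) \<Longrightarrow>
      (\<integral>z. H (fst z) (score (snd z)) \<partial>?M)
      = K * eta * (\<integral>t. H True t * score_kernel True t \<partial>lborel)
        + K * (1 - eta) * (\<integral>t. H False t * score_kernel False t \<partial>lborel)"
    using integral_score by blast
  have space_M: "space ?M = UNIV" by (simp add: env_measure_def space_pair_measure)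
  have [measurable]: "sig -` A \<in> sets borel" using measurable_sets_borel[OF assms(1,5)] .
  define I where "I y = (\<integral>t. indicator (sig -` A) t * score_kernel y t \<partial>lborel)" for y
  define J where "J y = (\<integral>t. indicator (sig -` A) t * sig t * score_kernel y t \<partial>lborel)" for y
  have "measure ?M {z \<in> space ?M. fst z \<and> lin_clf sig w_ns w_sp b (snd z) \<in> A}
      = (\<integral>z. indicator {z \<in> space ?M. fst z \<and> lin_clf sig w_ns w_sp b (snd z) \<in> A} z \<partial>?M)"
    by (simp add: Int_absorb2)
  also have "\<dots> = (\<integral>z. (if fst z then indicator (sig -` A) (score (snd z)) else 0) \<partial>?M)"
    by (rule Bochner_Integration.integral_cong) (auto simp: space_M lin_clf_eq_score split: split_indicator)
  also have "\<dots> = K * eta * I True"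
    using integral[of "\<lambda>y t. if y then indicator (sig -` A) t else 0"] by (simp add: I_def)
  finally have "measure ?M {z \<in> space ?M. fst z \<and> lin_clf sig w_ns w_sp b (snd z) \<in> A} = K * eta * I True" .
  moreover have "(\<integral>z. indicator {z \<in> space ?M. lin_clf sig w_ns w_sp b (snd z) \<in> A} z * lin_clf sig w_ns w_sp b (snd z) \<partial>?M)
      = (\<integral>z. indicator (sig -` A) (score (snd z)) * sig (score (snd z)) \<partial>?M)"
    by (rule Bochner_Integration.integral_cong) (auto simp: space_M lin_clf_eq_score split: split_indicator)
  moreover have "\<dots> = K * eta * J True + K * (1 - eta) * J False"
    using integral[of "\<lambda>y t. indicator (sig -` A) t * sig t"] sig_bounds
    by (simp add: J_def indicator_def mult.assoc)
  ultimately have "K * eta * I True = K * eta * J True + K * (1 - eta) * J False"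
    using calib \<open>A \<in> sets borel\<close> unfolding calibrated_on_def by simp
  then have "K * (eta * I True - eta * J True - (1 - eta) * J False) = 0"
    by (simp add: algebra_simps)
  then have "eta * I True - eta * J True = (1 - eta) * J False"
    using \<open>K > 0\<close> by simp
  moreover have "integrable lborel (\<lambda>t. indicator (sig -` A) t * score_kernel y t)"
    "integrable lborel (\<lambda>t. indicator (sig -` A) t * sig t * score_kernel y t)" for y
    using sig_bounds by (auto intro!: integrable_mult_score_kernel simp: indicator_def)
  ultimately show ?thesis
    by (simp add: I_def J_def algebra_simps)
qed

theorem calibrated_imp_AE:
  assumes "sig \<in> borel_measurable borel" "inj sig"
    and sig_bounds: "\<And>t. 0 \<le> sig t" "\<And>t. sig t \<le> 1"
    and "calibrated_on (lin_clf sig w_ns w_sp b) (env_measure eta mu_ns S_ns mu S)"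
  shows "AE t in lborel. eta * (1 - sig t) * score_kernel True t = (1 - eta) * sig t * score_kernel False t"
proof (rule AE_eq_if_preimage_integrals_eq[OF assms(1,2)])
  have "\<bar>eta * (1 - sig t)\<bar> \<le> 1" "\<bar>(1 - eta) * sig t\<bar> \<le> 1" for t
    using sig_bounds[of t] eta by (simp_all add: abs_mult mult_le_one)
  then show "integrable lborel (\<lambda>t. eta * (1 - sig t) * score_kernel True t)"
    "integrable lborel (\<lambda>t. (1 - eta) * sig t * score_kernel False t)"
    using assms(1) by (auto intro!: integrable_mult_score_kernel)
  show "0 \<le> eta * (1 - sig t) * score_kernel True t" "0 \<le> (1 - eta) * sig t * score_kernel False t" for t
    using sig_bounds[of t] eta score_kernel_pos by (simp_all add: less_imp_le)
qed (use assms calibrated_preimage_integrals_eq in simp_all)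

lemma calibrated_imp_logit_linear:
  assumes "sig \<in> borel_measurable borel" "inj sig" "\<And>t. 0 \<le> sig t" "\<And>t. sig t \<le> 1"
    and "calibrated_on (lin_clf sig w_ns w_sp b) (env_measure eta mu_ns S_ns mu S)"
  shows "AE t in lborel. eta * (1 - sig t) * exp (2 * score_mean / score_var * (t + b)) = (1 - eta) * sig t"
  using calibrated_imp_AE[OF assms]
proof eventually_elim
  case (elim t)
  then have "(eta * (1 - sig t) * exp (2 * score_mean / score_var * (t + b))) * score_kernel False t
      = ((1 - eta) * sig t) * score_kernel False t"
    by (simp add: score_kernel_ratio mult_ac)
  then show ?case using score_kernel_pos[of False t] by simp
qed

end

section \<open>Calibration across environments\<close>

lemma AE_logit_linear_slope_unique:
  fixes sig :: "real \<Rightarrow> real"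
  assumes sig: "\<And>t. 0 < sig t" "\<And>t. sig t < 1"
    and "AE t in lborel. eta * (1 - sig t) * exp (\<beta>1 * (t + b)) = (1 - eta) * sig t"
    and "AE t in lborel. eta * (1 - sig t) * exp (\<beta>2 * (t + b)) = (1 - eta) * sig t"
  shows "\<beta>1 = \<beta>2"
proof -
  have "AE t in lborel. eta * (1 - sig t) * exp (\<beta>1 * (t + b)) = eta * (1 - sig t) * exp (\<beta>2 * (t + b))
      \<and> eta * (1 - sig t) * exp (\<beta>1 * (t + b)) = (1 - eta) * sig t \<and> t \<noteq> - b"
    using assms(3,4) AE_lborel_singleton[of "- b"] by eventually_elim auto
  then obtain t where t: "eta * (1 - sig t) * exp (\<beta>1 * (t + b)) = eta * (1 - sig t) * exp (\<beta>2 * (t + b))"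
    "eta * (1 - sig t) * exp (\<beta>1 * (t + b)) = (1 - eta) * sig t" "t \<noteq> - b"
    using AE_lborel_ex by blast
  have "eta \<noteq> 0" using t(2) sig[of t] by auto
  then have "exp (\<beta>1 * (t + b)) = exp (\<beta>2 * (t + b))"
    using t(1) sig[of t] by simp
  then show ?thesis using t(3) by (simp add: add_eq_0_iff2)
qed

lemma AE_logit_linear_slope_nonzero:
  fixes sig :: "real \<Rightarrow> real"
  assumes "inj sig"
    and "AE t in lborel. eta * (1 - sig t) * exp (\<beta> * (t + b)) = (1 - eta) * sig t"
  shows "\<beta> \<noteq> 0"
proof
  assume "\<beta> = 0"
  from assms(2) have sig_const: "AE t in lborel. sig t = eta"
    by eventually_elim (simp add: \<open>\<beta> = 0\<close> algebra_simps)
  then obtain t1 where "sig t1 = eta" using AE_lborel_ex by blast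
  have "AE t in lborel. sig t = eta \<and> t \<noteq> t1"
    using sig_const AE_lborel_singleton[of t1] by eventually_elim auto
  then obtain t2 where "sig t2 = eta" "t2 \<noteq> t1" using AE_lborel_ex by blast
  then show False using \<open>sig t1 = eta\<close> \<open>inj sig\<close> by (metis injD)
qed

lemma general_position_affine_hyperplane:
  fixes S :: "nat \<Rightarrow> real^'sp^'sp" and mu :: "nat \<Rightarrow> real^'sp" and x u :: "real^'sp" and r :: real
  assumes "general_position k S mu" "x \<noteq> 0"
    and on_hyperplane: "\<And>i. i < k \<Longrightarrow> u \<bullet> (S i *v x + mu i) = r"
  shows "u = 0"
proof -
  define V where "V = {(S i *v x + mu i, 1::real) | i. i < k}"
  have "dim V = DIM((real^'sp) \<times> real)"
    using assms(1,2) unfolding general_position_def V_def by simp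
  then have "span V = UNIV" using dim_eq_full by blast
  moreover have "orthogonal (u, - r) v" if "v \<in> V" for v
    using that on_hyperplane by (auto simp: V_def orthogonal_def)
  ultimately have "orthogonal (u, - r) (u, - r)"
    by (intro orthogonal_to_span[of "(u, - r)" V]) auto
  then have "(u, - r) = 0" by (simp only: orthogonal_def inner_eq_zero_iff)
  then show ?thesis by (simp add: zero_prod_def)
qed

lemma general_position_mean_var_proportional:
  fixes S :: "nat \<Rightarrow> real^'sp^'sp" and mu :: "nat \<Rightarrow> real^'sp"
    and S_ns :: "real^'ns^'ns" and mu_ns w_ns :: "real^'ns" and w_sp :: "real^'sp"
  assumes "general_position k S mu" "c \<noteq> 0"
    and proportional: "\<And>i. i < k \<Longrightarrow>
      w_ns \<bullet> mu_ns + w_sp \<bullet> mu i = c * (w_ns \<bullet> (S_ns *v w_ns) + w_sp \<bullet> (S i *v w_sp))"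
  shows "w_sp = 0"
proof (rule ccontr)
  assume "w_sp \<noteq> 0"
  define x where "x = (- c) *\<^sub>R w_sp"
  have "x \<noteq> 0" using \<open>c \<noteq> 0\<close> \<open>w_sp \<noteq> 0\<close> by (simp add: x_def)
  moreover have "w_sp \<bullet> (S i *v x + mu i) = c * (w_ns \<bullet> (S_ns *v w_ns)) - w_ns \<bullet> mu_ns" if "i < k" for i
    using proportional[OF that] unfolding x_def
    by (simp add: matrix_vector_mult_scaleR inner_add_right algebra_simps del: scaleR_minus_left)
  ultimately have "w_sp = 0" by (rule general_position_affine_hyperplane[OF assms(1)])
  with \<open>w_sp \<noteq> 0\<close> show False by contradiction
qed

theorem theorem1:
  fixes k :: nat and eta :: real
    and mu_ns :: "real^'ns" and S_ns :: "real^'ns^'ns"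
    and mu :: "nat \<Rightarrow> real^'sp" and S :: "nat \<Rightarrow> real^'sp^'sp"
    and sig :: "real \<Rightarrow> real"
    and w_ns :: "real^'ns" and w_sp :: "real^'sp" and b :: real
  assumes k_gt: "k > 2 * CARD('sp)"
    and eta: "0 \<le> eta" "eta \<le> 1"
    and S_ns_spd: "spd S_ns"
    and S_spd: "\<And>i. i < k \<Longrightarrow> spd (S i)"
    and sig_bij: "bij_betw sig UNIV {0<..<1}"
    and sig_meas: "sig \<in> borel_measurable borel"
    and gp: "general_position k S mu"
    and calib: "\<And>i. i < k \<Longrightarrow>
       calibrated_on (lin_clf sig w_ns w_sp b) (env_measure eta mu_ns S_ns (mu i) (S i))"
  shows "w_sp = 0"
proof (rule ccontr)
  assume "w_sp \<noteq> 0"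
  have sig: "inj sig" "\<And>t. 0 < sig t" "\<And>t. sig t < 1"
    using sig_bij by (auto simp: bij_betw_def)
  define v where "v i = w_ns \<bullet> (S_ns *v w_ns) + w_sp \<bullet> (S i *v w_sp)" for i
  define m where "m i = w_ns \<bullet> mu_ns + w_sp \<bullet> mu i" for i
  have v_pos: "v i > 0"
    and logit: "AE t in lborel. eta * (1 - sig t) * exp (2 * m i / v i * (t + b)) = (1 - eta) * sig t"
    if "i < k" for i
  proof -
    interpret linear_score_env eta mu_ns S_ns "mu i" "S i" w_ns w_sp b
      using eta S_ns_spd S_spd[OF that] \<open>w_sp \<noteq> 0\<close> by unfold_locales auto
    show "v i > 0" using score_var_pos by (simp add: v_def score_var_def)
    show "AE t in lborel. eta * (1 - sig t) * exp (2 * m i / v i * (t + b)) = (1 - eta) * sig t"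
      using calibrated_imp_logit_linear[OF sig_meas sig(1) less_imp_le[OF sig(2)] less_imp_le[OF sig(3)] calib[OF that]]
      by (simp add: v_def m_def score_var_def score_mean_def)
  qed
  have "0 < k" using k_gt by simp
  define c where "c = m 0 / v 0"
  have "c \<noteq> 0"
    using AE_logit_linear_slope_nonzero[OF sig(1) logit[OF \<open>0 < k\<close>]] by (simp add: c_def)
  moreover have "m i = c * v i" if "i < k" for i
    using AE_logit_linear_slope_unique[OF sig(2,3) logit[OF that] logit[OF \<open>0 < k\<close>]]
      v_pos[OF that] v_pos[OF \<open>0 < k\<close>]
    by (simp add: c_def field_simps)
  ultimately have "w_sp = 0"
    unfolding m_def v_def by (rule general_position_mean_var_proportional[OF gp])
  with \<open>w_sp \<noteq> 0\<close> show False by contradiction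
qed

end
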